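(* Let $\mu$ be a Borel probability measure on $\mathbb{R}^n$, let $D>0$, and define $\theta_D(x)=\frac{1}{4D^2}|x|^2$ if $|x|\le D$ and $\theta_D(x)=+\infty$ if $|x|>D$, for $x\in\mathbb{R}^n$. For $\varphi:\mathbb{R}^n\to\mathbb{R}$ let $Q_1^{\theta_D}\varphi(x)=\inf\{\varphi(y)+\theta_D(x-y):y\in\mathbb{R}^n\}$. (a) If $|x-y|\le D$ for all $x,y\in\operatorname{supp}\mu$, then for every convex function $\varphi:\mathbb{R}^n\to\mathbb{R}$ bounded from below, $$\int_{\mathbb{R}^n}e^{Q_1^{\theta_D}\varphi}\,d\mu\int_{\mathbb{R}^n}e^{-\varphi}\,d\mu\le1.$$ (b) Conversely, if the inequality in (a) holds for every convex function $\varphi:\mathbb{R}^n\to\mathbb{R}$ bounded from below, then $|x-y|\le D$ for all $x,y\in\operatorname{supp}\mu$.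
   Context: $|\cdot|$ denotes the Euclidean norm on $\mathbb{R}^n$; $\operatorname{supp}\mu$ is the support of $\mu$. *)

theory Defs
  imports "HOL-Analysis.Analysis" "HOL-Probability.Probability"
begin

definition msupp :: "'a::euclidean_space measure \<Rightarrow> 'a set" where
  "msupp M = {x. \<forall>e>0. emeasure M (ball x e) > 0}"

definition theta :: "real \<Rightarrow> 'a::euclidean_space \<Rightarrow> ereal" where
  "theta D x = (if norm x \<le> D then ereal ((norm x)\<^sup>2 / (4 * D\<^sup>2)) else \<infinity>)"

definition Q1 :: "real \<Rightarrow> ('a::euclidean_space \<Rightarrow> real) \<Rightarrow> 'a \<Rightarrow> ereal" where
  "Q1 D \<phi> x = (INF y. ereal (\<phi> y) + theta D (x - y))"

end

theory Submission
  imports Defs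
begin

(*
  (a) Put F = int e^(Q phi), Z = int e^(-phi) and let g1 = e^(Q phi)/F, g2 = e^(-phi)/Z be the
  corresponding probability densities. Moving x towards a point b by the fraction
  t = (g1 - g2)_+ / g1 costs at most t^2/4 in theta_D whenever |x - b| <= D, so
  convexity of phi gives pointwise
      g1 Q phi <= (g1 - (g1 - g2)_+) phi + (g1 - g2)_+ phi(b) + (g1 - g2)_+^2 / (4 g1),
  and the last term is at most h(g1) + h(g2) with h(s) = s ln s - s + 1 >= 0. Taking b to be the
  barycentre of (g2 - g1)_+ mu, which stays within D of the support, Jensen's inequality lets the
  phi-terms integrate to something non-positive, and the integrated inequality reads
  ln F + ln Z <= 0.

  (b) If two support points are at distance R > D, a steep ramp phi in the direction joining them
  vanishes near the first point, while theta_D forbids moves longer than D, so Q phi is large near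
  the second one; the product of the two integrals then exceeds 1.
*)

section \<open>Elementary inequalities\<close>

lemma x_ln_x_quadratic_lower_bound_le_one:
  fixes s :: real assumes "0 < s" "s \<le> 1"
  shows "(s - 1)\<^sup>2 / 2 \<le> s * ln s - s + 1"
proof -
  let ?f = "\<lambda>x::real. x * ln x - x + 1 - (x - 1)\<^sup>2 / 2"
  have "?f 1 \<le> ?f s"
  proof (rule DERIV_nonpos_imp_nonincreasing[OF assms(2)])
    fix x assume x: "s \<le> x" "x \<le> 1"
    hence "x > 0" using assms by auto
    hence "DERIV ?f x :> ln x + 1 - x" and "ln x + 1 - x \<le> 0"
      using ln_le_minus_one[of x]
      by (auto intro!: derivative_eq_intros simp: power2_eq_square field_simps)
    thus "\<exists>y. DERIV ?f x :> y \<and> y \<le> 0" by blast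
  qed
  thus ?thesis by simp
qed

lemma x_ln_x_quadratic_lower_bound_ge_one:
  fixes s :: real assumes "1 \<le> s"
  shows "(s - 1)\<^sup>2 / (2 * s) \<le> s * ln s - s + 1"
proof -
  let ?f = "\<lambda>x::real. x * ln x - x + 1 - (x - 1)\<^sup>2 / (2 * x)"
  have "?f 1 \<le> ?f s"
  proof (rule DERIV_nonneg_imp_nondecreasing[OF assms])
    fix x assume x: "1 \<le> x" "x \<le> s"
    hence "DERIV ?f x :> ln x - (x\<^sup>2 - 1) / (2 * x\<^sup>2)"
      by (auto intro!: derivative_eq_intros simp: power2_eq_square field_simps)
    moreover have "(x\<^sup>2 - 1) / (2 * x\<^sup>2) \<le> 1 - 1 / x"
    proof -
      have "0 \<le> x * (x - 1)\<^sup>2" using x by simp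
      thus ?thesis using x by (simp add: field_simps power2_eq_square algebra_simps)
    qed
    moreover have "1 - 1 / x \<le> ln x"
      using ln_le_minus_one[of "1 / x"] x by (simp add: ln_div)
    ultimately show "\<exists>y. DERIV ?f x :> y \<and> y \<ge> 0" by force
  qed
  thus ?thesis by simp
qed

lemma x_ln_x_minus_x_plus_one_nonneg: "0 < s \<Longrightarrow> 0 \<le> s * ln s - s + (1::real)"
  using x_ln_x_quadratic_lower_bound_le_one[of s] x_ln_x_quadratic_lower_bound_ge_one[of s]
  by (smt (verit) divide_nonneg_pos zero_le_power2)

lemma entropy_pair_bound:
  fixes a b :: real assumes "0 < b" "b < a"
  shows "(a - b)\<^sup>2 / (4 * a) \<le> (a * ln a - a + 1) + (b * ln b - b + 1)"
proof (cases "1 \<le> a")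
  case True
  have "(b - 1)\<^sup>2 / (2 * a) \<le> b * ln b - b + 1"
  proof (cases "b \<le> 1")
    case True
    have "(b - 1)\<^sup>2 / (2 * a) \<le> (b - 1)\<^sup>2 / 2"
      using \<open>1 \<le> a\<close> by (intro divide_left_mono) auto
    thus ?thesis using x_ln_x_quadratic_lower_bound_le_one[OF assms(1) True] by linarith
  next
    case False
    have "(b - 1)\<^sup>2 / (2 * a) \<le> (b - 1)\<^sup>2 / (2 * b)"
      using assms by (intro divide_left_mono) auto
    thus ?thesis using x_ln_x_quadratic_lower_bound_ge_one[of b] False by linarith
  qed
  moreover have "(a - b)\<^sup>2 / (4 * a) \<le> (a - 1)\<^sup>2 / (2 * a) + (b - 1)\<^sup>2 / (2 * a)"
  proof -
    have "(a - b)\<^sup>2 \<le> 2 * (a - 1)\<^sup>2 + 2 * (b - 1)\<^sup>2"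
      using zero_le_power2[of "a + b - 2"] by (simp add: power2_eq_square algebra_simps)
    thus ?thesis using True by (simp add: field_simps)
  qed
  ultimately show ?thesis
    using x_ln_x_quadratic_lower_bound_ge_one[OF True] by linarith
next
  case False
  have "(a - b)\<^sup>2 / (4 * a) \<le> (b - 1)\<^sup>2 / 2"
  proof (cases "1 / 2 \<le> a")
    case True
    have "(a - b)\<^sup>2 / (4 * a) \<le> (a - b)\<^sup>2 / 2"
      using True by (intro divide_left_mono) auto
    also have "\<dots> \<le> (b - 1)\<^sup>2 / 2"
      using assms False by (intro divide_right_mono) (auto simp flip: abs_le_square_iff)
    finally show ?thesis .
  next
    case small: False
    have "(a - b)\<^sup>2 \<le> a\<^sup>2" using assms by (intro power_mono) auto
    hence "(a - b)\<^sup>2 / (4 * a) \<le> a / 4"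
      using assms by (simp add: field_simps power2_eq_square)
    also have "\<dots> \<le> (b - 1)\<^sup>2 / 2"
    proof -
      have "(1 / 2)\<^sup>2 \<le> (b - 1)\<^sup>2" using assms small by (auto simp flip: abs_le_square_iff)
      thus ?thesis using small by (simp add: power2_eq_square)
    qed
    finally show ?thesis .
  qed
  thus ?thesis
    using x_ln_x_quadratic_lower_bound_le_one[of a] x_ln_x_quadratic_lower_bound_le_one[of b]
      assms False by (smt (verit) zero_le_power2 divide_nonneg_pos)
qed

lemma exp_neg_mult_abs_le:
  fixes s c :: real assumes "c \<le> s"
  shows "exp (- s) * \<bar>s\<bar> \<le> exp (- c) * (1 + \<bar>c\<bar>)"
proof -
  have "s - c \<le> exp (s - c)" using exp_ge_add_one_self[of "s - c"] by linarith
  hence "exp (- s) * (s - c) \<le> exp (- s) * exp (s - c)" by (intro mult_left_mono) auto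
  also have "\<dots> = exp (- c)" by (simp flip: exp_add)
  finally have "exp (- s) * (s - c) \<le> exp (- c)" .
  moreover have "exp (- s) * \<bar>c\<bar> \<le> exp (- c) * \<bar>c\<bar>"
    using assms by (intro mult_right_mono) auto
  moreover have "exp (- s) * \<bar>s\<bar> \<le> exp (- s) * (s - c) + exp (- s) * \<bar>c\<bar>"
    using assms by (simp flip: distrib_left add: mult_left_mono)
  ultimately show ?thesis by (simp add: algebra_simps)
qed

section \<open>Convex functions\<close>

lemma convex_on_max:
  assumes "convex_on S f" and "convex_on S g"
  shows "convex_on S (\<lambda>x. max (f x) (g x))"
proof (rule convex_onI)
  fix t :: real and x y assume "0 < t" "t < 1" "x \<in> S" "y \<in> S"
  hence "f ((1 - t) *\<^sub>R x + t *\<^sub>R y) \<le> (1 - t) * max (f x) (g x) + t * max (f y) (g y)"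
    and "g ((1 - t) *\<^sub>R x + t *\<^sub>R y) \<le> (1 - t) * max (f x) (g x) + t * max (f y) (g y)"
    using convex_onD[OF assms(1), of t x y] convex_onD[OF assms(2), of t x y]
    by (smt (verit) mult_left_mono max.cobounded1 max.cobounded2)+
  thus "max (f ((1 - t) *\<^sub>R x + t *\<^sub>R y)) (g ((1 - t) *\<^sub>R x + t *\<^sub>R y))
      \<le> (1 - t) * max (f x) (g x) + t * max (f y) (g y)" by simp
qed (use assms convex_on_imp_convex in blast)

lemma convex_on_affine_ramp:
  fixes u :: "'a::real_inner"
  assumes "0 \<le> a"
  shows "convex_on UNIV (\<lambda>z. a * max (u \<bullet> z - c) 0)"
proof -
  have "convex_on UNIV (\<lambda>z. u \<bullet> z - c)"
    by (rule convex_onI) (auto simp: inner_add_right algebra_simps)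
  thus ?thesis using assms by (intro convex_on_cmul convex_on_max) (auto simp: convex_on_const)
qed

lemma convex_strict_epigraph:
  assumes "convex_on UNIV f"
  shows "convex {p. f (fst p) < snd p}"
proof (rule convexI)
  fix p q :: "'a \<times> real" and u v :: real
  assume p: "p \<in> {p. f (fst p) < snd p}" and q: "q \<in> {p. f (fst p) < snd p}"
    and uv: "0 \<le> u" "0 \<le> v" "u + v = 1"
  have "f (u *\<^sub>R fst p + v *\<^sub>R fst q) \<le> u * f (fst p) + v * f (fst q)"
    using assms uv by (auto simp: convex_on_def)
  also have "\<dots> < u * snd p + v * snd q"
  proof (cases "u = 0")
    case False
    hence "u * f (fst p) < u * snd p" using p uv by simp
    moreover have "v * f (fst q) \<le> v * snd q" using q uv by (simp add: mult_left_mono)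
    ultimately show ?thesis by linarith
  qed (use q uv in simp)
  finally show "u *\<^sub>R p + v *\<^sub>R q \<in> {p. f (fst p) < snd p}" by simp
qed

lemma convex_on_affine_minorant:
  fixes \<phi> :: "'a::euclidean_space \<Rightarrow> real"
  assumes "convex_on UNIV \<phi>"
  obtains v where "\<And>z. \<phi> b + v \<bullet> (z - b) \<le> \<phi> z"
proof -
  \<comment> \<open>A hyperplane separating \<open>(b, \<phi> b)\<close> from the open epigraph; it cannot be vertical.\<close>
  let ?S = "(\<lambda>p. p - (b, \<phi> b)) ` {p. \<phi> (fst p) < snd p}"
  have "convex ?S" using convex_strict_epigraph[OF assms] by (rule convex_translation_subtract)
  moreover have "0 \<notin> ?S" by (auto simp: zero_prod_def)
  ultimately obtain a where "a \<noteq> 0" and a: "\<forall>p\<in>?S. 0 \<le> a \<bullet> p"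
    using separating_hyperplane_set_0 by blast
  obtain w c where wc: "a = (w, c)" by fastforce
  have sep: "0 \<le> w \<bullet> (z - b) + c * (s - \<phi> b)" if "\<phi> z < s" for z s
    using a that unfolding wc by force
  have "0 < c"
  proof (rule ccontr)
    assume "\<not> 0 < c"
    moreover have "0 \<le> c" using sep[of b "\<phi> b + 1"] by simp
    ultimately have "c = 0" by simp
    hence "w \<bullet> w \<le> 0" using sep[of "b - w" "\<phi> (b - w) + 1"] by simp
    hence "w = 0" using inner_ge_zero[of w] by simp
    thus False using \<open>a \<noteq> 0\<close> \<open>c = 0\<close> wc by (simp add: zero_prod_def)
  qed
  have "\<phi> b + (- (1 / c) *\<^sub>R w) \<bullet> (z - b) \<le> \<phi> z" for z
  proof (rule field_le_epsilon)
    fix \<epsilon> :: real assume "0 < \<epsilon>"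
    hence "0 \<le> (w \<bullet> (z - b)) / c + (\<phi> z + \<epsilon> - \<phi> b)"
      using sep[of z "\<phi> z + \<epsilon>"] \<open>0 < c\<close> by (simp add: field_simps)
    thus "\<phi> b + (- (1 / c) *\<^sub>R w) \<bullet> (z - b) \<le> \<phi> z + \<epsilon>" by simp
  qed
  thus ?thesis using that by blast
qed

lemma convex_on_weighted_integral:
  fixes \<phi> :: "'a::euclidean_space \<Rightarrow> real" and w :: "'a \<Rightarrow> real"
  assumes cv: "convex_on UNIV \<phi>" and w: "\<And>z. 0 \<le> w z" and iw: "integrable M w"
    and iz: "integrable M (\<lambda>z. w z *\<^sub>R z)" and i\<phi>: "integrable M (\<lambda>z. w z * \<phi> z)"
    and m: "integral\<^sup>L M w = m" "0 < m"
  shows "m * \<phi> ((1 / m) *\<^sub>R integral\<^sup>L M (\<lambda>z. w z *\<^sub>R z)) \<le> integral\<^sup>L M (\<lambda>z. w z * \<phi> z)"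
proof -
  define b where "b = (1 / m) *\<^sub>R integral\<^sup>L M (\<lambda>z. w z *\<^sub>R z)"
  obtain v where v: "\<And>z. \<phi> b + v \<bullet> (z - b) \<le> \<phi> z" using convex_on_affine_minorant[OF cv] by blast
  let ?aff = "\<lambda>z. w z * (\<phi> b - v \<bullet> b) + v \<bullet> (w z *\<^sub>R z)"
  have iaff: "integrable M ?aff"
    using iw iz by (intro Bochner_Integration.integrable_add integrable_mult_left integrable_inner_right)
  have "integral\<^sup>L M ?aff = m * (\<phi> b - v \<bullet> b) + v \<bullet> integral\<^sup>L M (\<lambda>z. w z *\<^sub>R z)"
    unfolding
      Bochner_Integration.integral_add[OF integrable_mult_left[OF iw] integrable_inner_right[OF iz]]
      integral_inner_right[of v, OF iz]
    using m(1) by (simp add: mult.commute)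
  also have "\<dots> = m * \<phi> b" using m(2) unfolding b_def by (simp add: algebra_simps)
  finally have "m * \<phi> b = integral\<^sup>L M ?aff" ..
  also have "\<dots> \<le> integral\<^sup>L M (\<lambda>z. w z * \<phi> z)"
  proof (rule integral_mono[OF iaff i\<phi>])
    fix z
    have "w z * (\<phi> b + v \<bullet> (z - b)) \<le> w z * \<phi> z" using v w by (intro mult_left_mono)
    thus "?aff z \<le> w z * \<phi> z" by (simp add: algebra_simps inner_diff_right)
  qed
  finally show ?thesis unfolding b_def .
qed

lemma weighted_barycentre_dist_le:
  fixes w :: "'a::euclidean_space \<Rightarrow> real"
  assumes w: "\<And>z. 0 \<le> w z" and iw: "integrable M w" and iz: "integrable M (\<lambda>z. w z *\<^sub>R z)"
    and m: "integral\<^sup>L M w = m" "0 < m" and r: "AE z in M. norm (x - z) \<le> r"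
  shows "norm (x - (1 / m) *\<^sub>R integral\<^sup>L M (\<lambda>z. w z *\<^sub>R z)) \<le> r"
proof -
  have ix: "integrable M (\<lambda>z. w z *\<^sub>R (x - z))"
    using iw iz by (simp add: scaleR_diff_right)
  have "x - (1 / m) *\<^sub>R integral\<^sup>L M (\<lambda>z. w z *\<^sub>R z) = (1 / m) *\<^sub>R integral\<^sup>L M (\<lambda>z. w z *\<^sub>R (x - z))"
    using iw iz m by (simp add: scaleR_diff_right algebra_simps)
  hence "norm (x - (1 / m) *\<^sub>R integral\<^sup>L M (\<lambda>z. w z *\<^sub>R z))
      \<le> (1 / m) * integral\<^sup>L M (\<lambda>z. norm (w z *\<^sub>R (x - z)))"
    using m(2) integral_norm_bound[of M "\<lambda>z. w z *\<^sub>R (x - z)"] by (simp add: divide_right_mono)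
  also have "\<dots> \<le> (1 / m) * integral\<^sup>L M (\<lambda>z. w z * r)"
  proof (intro mult_left_mono integral_mono_AE)
    show "AE z in M. norm (w z *\<^sub>R (x - z)) \<le> w z * r"
      using r by eventually_elim (simp add: w mult_left_mono)
  qed (use m(2) integrable_norm[OF ix] iw in auto)
  also have "\<dots> = r" using m by simp
  finally show ?thesis .
qed

lemma Jensen_centre_within_diameter:
  fixes \<phi> :: "'a::euclidean_space \<Rightarrow> real"
  assumes cv: "convex_on UNIV \<phi>" and w: "\<And>z. 0 \<le> w z" and iw: "integrable M w"
    and iz: "integrable M (\<lambda>z. w z *\<^sub>R z)" and i\<phi>: "integrable M (\<lambda>z. w z * \<phi> z)"
    and K: "AE z in M. z \<in> K" "x0 \<in> K" "\<And>x y. x \<in> K \<Longrightarrow> y \<in> K \<Longrightarrow> norm (x - y) \<le> D"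
  obtains b where "\<And>x. x \<in> K \<Longrightarrow> norm (x - b) \<le> D"
    and "integral\<^sup>L M w * \<phi> b \<le> integral\<^sup>L M (\<lambda>z. w z * \<phi> z)"
proof (cases "integral\<^sup>L M w = 0")
  case True
  hence "AE z in M. w z = 0" using integral_nonneg_eq_0_iff_AE[OF iw] w by simp
  hence "integral\<^sup>L M (\<lambda>z. w z * \<phi> z) = 0" by (intro integral_eq_zero_AE) auto
  thus ?thesis using that[of x0] K True by simp
next
  case False
  define m where "m = integral\<^sup>L M w"
  have "0 < m" using False w unfolding m_def by (simp add: order_less_le integral_nonneg)
  define b where "b = (1 / m) *\<^sub>R integral\<^sup>L M (\<lambda>z. w z *\<^sub>R z)"
  show ?thesis
  proof (rule that)
    fix x assume "x \<in> K"
    have "AE z in M. norm (x - z) \<le> D" using K(1) by eventually_elim (use K(3) \<open>x \<in> K\<close> in blast)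
    thus "norm (x - b) \<le> D"
      unfolding b_def by (rule weighted_barycentre_dist_le[OF w iw iz m_def[symmetric] \<open>0 < m\<close>])
  qed (use convex_on_weighted_integral[OF cv w iw iz i\<phi> m_def[symmetric] \<open>0 < m\<close>] in
        \<open>simp add: b_def m_def\<close>)
qed

section \<open>Support of a measure\<close>

lemma AE_in_msupp:
  fixes M :: "'a::euclidean_space measure"
  assumes "sets M = sets borel"
  shows "AE x in M. x \<in> msupp M"
proof -
  \<comment> \<open>By Lindel\<ouml>f, countably many null balls already cover the complement of the support.\<close>
  define F where "F = {ball x e | x e. 0 < e \<and> emeasure M (ball x e) = 0}"
  have "\<And>S. S \<in> F \<Longrightarrow> open S" unfolding F_def by blast
  then obtain F' where F': "F' \<subseteq> F" "countable F'" "\<Union>F' = \<Union>F" by (rule Lindelof)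
  have "S \<in> null_sets M" if "S \<in> F" for S
  proof -
    obtain x e where "S = ball x e" "emeasure M (ball x e) = 0"
      using \<open>S \<in> F\<close> unfolding F_def by blast
    thus ?thesis using assms by (simp add: null_sets_def)
  qed
  hence "(\<Union>S\<in>F'. S) \<in> null_sets M" using F' by (intro null_sets_UN') auto
  moreover have "{x \<in> space M. x \<notin> msupp M} \<subseteq> (\<Union>S\<in>F'. S)"
  proof
    fix x assume "x \<in> {x \<in> space M. x \<notin> msupp M}"
    then obtain e where "0 < e" "\<not> 0 < emeasure M (ball x e)" unfolding msupp_def by auto
    hence "ball x e \<in> F" unfolding F_def by auto
    hence "x \<in> \<Union>F" using \<open>0 < e\<close> centre_in_ball by blast
    thus "x \<in> (\<Union>S\<in>F'. S)" using F'(3) by auto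
  qed
  ultimately show ?thesis by (rule AE_I')
qed

lemma msupp_nonempty:
  fixes M :: "'a::euclidean_space measure"
  assumes "prob_space M" and "sets M = sets borel"
  shows "msupp M \<noteq> {}"
  using AE_in_msupp[OF assms(2)] prob_space.AE_False[OF assms(1)] by auto

lemma measure_ball_pos_if_msupp:
  assumes "finite_measure M" and "x \<in> msupp M" and "0 < e"
  shows "0 < measure M (ball x e)"
  using assms finite_measure.emeasure_eq_measure[OF assms(1), of "ball x e"]
  unfolding msupp_def by auto

section \<open>The inf-convolution Q1\<close>

lemma theta_nonneg: "0 \<le> theta D h"
  unfolding theta_def by auto

lemma Q1_le:
  assumes "norm (x - y) \<le> D"
  shows "Q1 D \<phi> x \<le> ereal (\<phi> y + (norm (x - y))\<^sup>2 / (4 * D\<^sup>2))"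
proof -
  have "Q1 D \<phi> x \<le> ereal (\<phi> y) + theta D (x - y)"
    unfolding Q1_def by (rule INF_lower) simp
  thus ?thesis using assms unfolding theta_def by simp
qed

lemma Q1_ge:
  assumes "\<And>y. norm (x - y) \<le> D \<Longrightarrow> c \<le> \<phi> y"
  shows "ereal c \<le> Q1 D \<phi> x"
  unfolding Q1_def
proof (rule INF_greatest)
  fix y
  show "ereal c \<le> ereal (\<phi> y) + theta D (x - y)"
  proof (cases "norm (x - y) \<le> D")
    case True
    thus ?thesis using assms theta_nonneg[of D "x - y"] by (simp add: add_increasing2)
  qed (simp add: theta_def)
qed

lemma Q1_finite:
  assumes "0 \<le> D" and "bdd_below (range \<phi>)"
  obtains r where "Q1 D \<phi> x = ereal r"
proof -
  obtain c where "\<And>y. c \<le> \<phi> y" using assms(2) by (auto simp: bdd_below_def)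
  hence "ereal c \<le> Q1 D \<phi> x" by (intro Q1_ge)
  moreover have "Q1 D \<phi> x \<le> ereal (\<phi> x)" using Q1_le[of x x D \<phi>] assms(1) by simp
  ultimately show ?thesis using that by (cases "Q1 D \<phi> x") auto
qed

lemma real_Q1_le:
  assumes "bdd_below (range \<phi>)" and "norm (x - y) \<le> D"
  shows "real_of_ereal (Q1 D \<phi> x) \<le> \<phi> y + (norm (x - y))\<^sup>2 / (4 * D\<^sup>2)"
proof -
  have "0 \<le> D" using assms(2) norm_ge_zero order_trans by blast
  then obtain r where "Q1 D \<phi> x = ereal r" using Q1_finite assms(1) by blast
  thus ?thesis using Q1_le[OF assms(2), of \<phi>] by simp
qed

lemma real_Q1_ge:
  assumes "0 \<le> D" and "bdd_below (range \<phi>)" and "\<And>y. norm (x - y) \<le> D \<Longrightarrow> c \<le> \<phi> y"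
  shows "c \<le> real_of_ereal (Q1 D \<phi> x)"
proof -
  obtain r where "Q1 D \<phi> x = ereal r" using Q1_finite assms(1,2) by blast
  thus ?thesis using Q1_ge[of x D c \<phi>] assms(3) by simp
qed

lemma real_Q1_less_iff:
  assumes "0 \<le> D" and "bdd_below (range \<phi>)"
  shows "real_of_ereal (Q1 D \<phi> x) < a \<longleftrightarrow>
    (\<exists>h. norm h \<le> D \<and> \<phi> (x - h) + (norm h)\<^sup>2 / (4 * D\<^sup>2) < a)"
proof -
  obtain r where r: "Q1 D \<phi> x = ereal r" using Q1_finite assms by blast
  have "real_of_ereal (Q1 D \<phi> x) < a \<longleftrightarrow> Q1 D \<phi> x < ereal a"
    using r by simp
  also have "\<dots> \<longleftrightarrow> (\<exists>y. ereal (\<phi> y) + theta D (x - y) < ereal a)"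
    unfolding Q1_def by (simp add: INF_less_iff)
  also have "\<dots> \<longleftrightarrow> (\<exists>y. norm (x - y) \<le> D \<and> \<phi> y + (norm (x - y))\<^sup>2 / (4 * D\<^sup>2) < a)"
    unfolding theta_def by (auto split: if_splits)
  also have "\<dots> \<longleftrightarrow> (\<exists>h. norm h \<le> D \<and> \<phi> (x - h) + (norm h)\<^sup>2 / (4 * D\<^sup>2) < a)"
  proof (intro iffI; elim exE)
    fix y assume "norm (x - y) \<le> D \<and> \<phi> y + (norm (x - y))\<^sup>2 / (4 * D\<^sup>2) < a"
    thus "\<exists>h. norm h \<le> D \<and> \<phi> (x - h) + (norm h)\<^sup>2 / (4 * D\<^sup>2) < a"
      by (intro exI[of _ "x - y"]) simp
  next
    fix h assume "norm h \<le> D \<and> \<phi> (x - h) + (norm h)\<^sup>2 / (4 * D\<^sup>2) < a"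
    thus "\<exists>y. norm (x - y) \<le> D \<and> \<phi> y + (norm (x - y))\<^sup>2 / (4 * D\<^sup>2) < a"
      by (intro exI[of _ "x - h"]) simp
  qed
  finally show ?thesis .
qed

lemma borel_measurable_real_Q1:
  fixes \<phi> :: "'a::euclidean_space \<Rightarrow> real"
  assumes "0 \<le> D" and "bdd_below (range \<phi>)" and cont: "continuous_on UNIV \<phi>"
  shows "(\<lambda>x. real_of_ereal (Q1 D \<phi> x)) \<in> borel_measurable borel"
proof (subst borel_measurable_iff_less, intro allI)
  fix a
  have "{x. real_of_ereal (Q1 D \<phi> x) < a} =
      (\<Union>h\<in>cball 0 D. {x. \<phi> (x - h) + (norm h)\<^sup>2 / (4 * D\<^sup>2) < a})"
    using real_Q1_less_iff[OF assms(1,2)] by auto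
  moreover have "open {x. \<phi> (x - h) + (norm h)\<^sup>2 / (4 * D\<^sup>2) < a}" for h :: 'a
    by (intro open_Collect_less continuous_intros continuous_on_compose2[OF cont]) auto
  ultimately show "{x \<in> space borel. real_of_ereal (Q1 D \<phi> x) < a} \<in> sets borel"
    by (auto intro!: borel_open)
qed

lemma real_Q1_le_convex_combination:
  fixes \<phi> :: "'a::euclidean_space \<Rightarrow> real"
  assumes "D > 0" and "convex_on UNIV \<phi>" and "bdd_below (range \<phi>)"
    and "norm (x - b) \<le> D" and "0 \<le> t" "t \<le> 1"
  shows "real_of_ereal (Q1 D \<phi> x) \<le> (1 - t) * \<phi> x + t * \<phi> b + t\<^sup>2 / 4"
proof -
  define y where "y = (1 - t) *\<^sub>R x + t *\<^sub>R b"
  have xy: "norm (x - y) = t * norm (x - b)"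
    unfolding y_def using assms(5) by (simp add: algebra_simps flip: scaleR_diff_right)
  hence "norm (x - y) \<le> D" using assms(4-6) by (smt (verit) mult_left_le_one_le norm_ge_zero)
  hence "real_of_ereal (Q1 D \<phi> x) \<le> \<phi> y + (norm (x - y))\<^sup>2 / (4 * D\<^sup>2)"
    by (rule real_Q1_le[OF assms(3)])
  moreover have "\<phi> y \<le> (1 - t) * \<phi> x + t * \<phi> b"
    using assms(2,5,6) unfolding y_def by (auto dest: convex_onD)
  moreover have "(norm (x - y))\<^sup>2 / (4 * D\<^sup>2) \<le> t\<^sup>2 / 4"
  proof -
    have "(norm (x - y))\<^sup>2 \<le> t\<^sup>2 * D\<^sup>2"
      unfolding xy power_mult_distrib using assms(4,5) by (intro mult_left_mono power_mono) auto
    thus ?thesis using assms(1) by (simp add: field_simps)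
  qed
  ultimately show ?thesis by linarith
qed

section \<open>Bounded support implies the inequality\<close>

lemma entropy_transport_pointwise:
  fixes q p pb F Z :: real
  assumes conv: "\<And>t. 0 \<le> t \<Longrightarrow> t \<le> 1 \<Longrightarrow> q \<le> (1 - t) * p + t * pb + t\<^sup>2 / 4"
    and F: "0 < F" and Z: "0 < Z"
  defines "g1 \<equiv> exp q / F" and "g2 \<equiv> exp (- p) / Z"
  shows "ln F * g1 + ln Z * g2 \<le> max (g1 - g2) 0 * pb - max (g2 - g1) 0 * p + 2 - g1 - g2"
proof -
  define N where "N = max (g1 - g2) 0"
  have g1: "0 < g1" and g2: "0 < g2" unfolding g1_def g2_def using F Z by auto
  have "q * g1 \<le> ((1 - N / g1) * p + N / g1 * pb + (N / g1)\<^sup>2 / 4) * g1"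
    using conv[of "N / g1"] g1 g2 unfolding N_def by (intro mult_right_mono) auto
  also have "\<dots> = (g1 - N) * p + N * pb + N\<^sup>2 / (4 * g1)"
    using g1 by (simp add: field_simps power2_eq_square)
  also have "N\<^sup>2 / (4 * g1) \<le> (g1 * ln g1 - g1 + 1) + (g2 * ln g2 - g2 + 1)"
  proof (cases "g2 < g1")
    case True thus ?thesis unfolding N_def using entropy_pair_bound[OF g2] by simp
  next
    case False
    thus ?thesis unfolding N_def
      using x_ln_x_minus_x_plus_one_nonneg[OF g1] x_ln_x_minus_x_plus_one_nonneg[OF g2] by simp
  qed
  finally have "q * g1 \<le> (g1 - N) * p + N * pb + g1 * ln g1 + g2 * ln g2 - g1 - g2 + 2"
    by simp
  moreover have "ln g1 = q - ln F" "ln g2 = - p - ln Z"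
    unfolding g1_def g2_def using F Z by (simp_all add: ln_div)
  moreover have "g1 - N = g2 - max (g2 - g1) 0" unfolding N_def by simp
  ultimately show ?thesis unfolding N_def by (simp add: algebra_simps)
qed

lemma entropy_transport_integrated:
  fixes g1 g2 \<phi> :: "'a \<Rightarrow> real"
  assumes "prob_space M" and ig1: "integrable M g1" and ig2: "integrable M g2"
    and g1: "integral\<^sup>L M g1 = 1" and g2: "integral\<^sup>L M g2 = 1"
    and i\<phi>: "integrable M (\<lambda>x. max (g2 x - g1 x) 0 * \<phi> x)"
    and Jensen: "integral\<^sup>L M (\<lambda>x. max (g2 x - g1 x) 0) * \<phi> b
      \<le> integral\<^sup>L M (\<lambda>x. max (g2 x - g1 x) 0 * \<phi> x)"
    and pointwise: "AE x in M. ln F * g1 x + ln Z * g2 x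
      \<le> max (g1 x - g2 x) 0 * \<phi> b - max (g2 x - g1 x) 0 * \<phi> x + 2 - g1 x - g2 x"
  shows "ln F + ln Z \<le> 0"
proof -
  interpret prob_space M by fact
  have iN: "integrable M (\<lambda>x. max (g1 x - g2 x) 0)" and iP: "integrable M (\<lambda>x. max (g2 x - g1 x) 0)"
    using ig1 ig2 by (intro integrable_max; simp)+
  have "integral\<^sup>L M (\<lambda>x. max (g1 x - g2 x) 0) - integral\<^sup>L M (\<lambda>x. max (g2 x - g1 x) 0)
      = integral\<^sup>L M (\<lambda>x. g1 x - g2 x)"
    by (subst Bochner_Integration.integral_diff[OF iN iP, symmetric])
      (auto intro: Bochner_Integration.integral_cong)
  hence NP: "integral\<^sup>L M (\<lambda>x. max (g1 x - g2 x) 0) = integral\<^sup>L M (\<lambda>x. max (g2 x - g1 x) 0)"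
    using ig1 ig2 g1 g2 by simp
  have "ln F + ln Z = integral\<^sup>L M (\<lambda>x. ln F * g1 x + ln Z * g2 x)"
    using ig1 ig2 g1 g2 by simp
  also have "\<dots> \<le> integral\<^sup>L M
      (\<lambda>x. max (g1 x - g2 x) 0 * \<phi> b - max (g2 x - g1 x) 0 * \<phi> x + 2 - g1 x - g2 x)"
    using ig1 ig2 iN i\<phi> pointwise by (intro integral_mono_AE) auto
  also have "\<dots> = integral\<^sup>L M (\<lambda>x. max (g2 x - g1 x) 0) * \<phi> b
      - integral\<^sup>L M (\<lambda>x. max (g2 x - g1 x) 0 * \<phi> x)"
    using ig1 ig2 iN i\<phi> g1 g2 NP by (simp add: prob_space)
  also have "\<dots> \<le> 0" using Jensen by simp
  finally show ?thesis .
qed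

lemma integrable_dominated_weight:
  fixes M :: "'a::euclidean_space measure" and w \<phi> :: "'a \<Rightarrow> real"
  assumes "prob_space M" and sb: "sets M = sets borel"
    and wm: "w \<in> borel_measurable M" and \<phi>m: "\<phi> \<in> borel_measurable M"
    and w: "\<And>x. 0 \<le> w x" "\<And>x. w x \<le> exp (- \<phi> x) / Z" and "0 < Z" and c0: "\<And>y. c0 \<le> \<phi> y"
    and bounded: "AE x in M. norm x \<le> R"
  shows "integrable M (\<lambda>x. w x * \<phi> x)" and "integrable M (\<lambda>x. w x *\<^sub>R x)"
proof -
  interpret prob_space M by fact
  have "norm (w x * \<phi> x) \<le> exp (- c0) * (1 + \<bar>c0\<bar>) / Z" for x
  proof -
    have "norm (w x * \<phi> x) \<le> exp (- \<phi> x) / Z * \<bar>\<phi> x\<bar>"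
      using mult_right_mono[OF w(2)[of x] abs_ge_zero[of "\<phi> x"]] w(1)[of x] by (simp add: abs_mult)
    also have "\<dots> \<le> exp (- c0) * (1 + \<bar>c0\<bar>) / Z"
      using exp_neg_mult_abs_le[OF c0[of x]] \<open>0 < Z\<close> by (simp add: divide_right_mono)
    finally show ?thesis .
  qed
  thus "integrable M (\<lambda>x. w x * \<phi> x)"
    using wm \<phi>m by (intro integrable_const_bound[where B="exp (- c0) * (1 + \<bar>c0\<bar>) / Z"]) auto
  have w_le: "w x \<le> exp (- c0) / Z" for x
    using w(2)[of x] c0[of x] \<open>0 < Z\<close> by (smt (verit) divide_right_mono exp_le_cancel_iff)
  have "AE x in M. norm (w x *\<^sub>R x) \<le> exp (- c0) / Z * R"
    using bounded
  proof eventually_elim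
    case (elim x)
    have "w x * norm x \<le> exp (- c0) / Z * R" using w_le w(1) elim \<open>0 < Z\<close> by (intro mult_mono) auto
    thus ?case using w(1)[of x] by simp
  qed
  moreover have "(\<lambda>x. w x *\<^sub>R x) \<in> borel_measurable M"
    using wm by (intro borel_measurable_scaleR) (simp_all add: measurable_cong_sets[OF sb refl])
  ultimately show "integrable M (\<lambda>x. w x *\<^sub>R x)" by (intro integrable_const_bound)
qed

lemma entropy_transport_log_bound:
  fixes M :: "'a::euclidean_space measure" and q \<phi> :: "'a \<Rightarrow> real"
  assumes P: "prob_space M" and sb: "sets M = sets borel"
    and cv: "convex_on UNIV \<phi>" and c0: "\<And>y. c0 \<le> \<phi> y"
    and K: "AE x in M. x \<in> K" "x0 \<in> K" "\<And>x y. x \<in> K \<Longrightarrow> y \<in> K \<Longrightarrow> norm (x - y) \<le> D"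
    and transport: "\<And>x b t. x \<in> K \<Longrightarrow> (\<And>y. y \<in> K \<Longrightarrow> norm (y - b) \<le> D) \<Longrightarrow> 0 \<le> t \<Longrightarrow> t \<le> 1
      \<Longrightarrow> q x \<le> (1 - t) * \<phi> x + t * \<phi> b + t\<^sup>2 / 4"
    and ieq: "integrable M (\<lambda>x. exp (q x))" and ie\<phi>: "integrable M (\<lambda>x. exp (- \<phi> x))"
    and F: "F = integral\<^sup>L M (\<lambda>x. exp (q x))" "0 < F"
    and Z: "Z = integral\<^sup>L M (\<lambda>x. exp (- \<phi> x))" "0 < Z"
  shows "ln F + ln Z \<le> 0"
proof -
  define g1 where "g1 x = exp (q x) / F" for x
  define g2 where "g2 x = exp (- \<phi> x) / Z" for x
  define w where "w x = max (g2 x - g1 x) 0" for x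
  have ig: "integrable M g1" "integrable M g2"
    unfolding g1_def g2_def using ieq ie\<phi> by (auto intro: integrable_divide_zero)
  have "integral\<^sup>L M g1 = 1" "integral\<^sup>L M g2 = 1"
    using F Z unfolding g1_def[abs_def] g2_def[abs_def] by simp_all
  have w: "0 \<le> w x" "w x \<le> exp (- \<phi> x) / Z" for x
    unfolding w_def g1_def g2_def using F(2) Z(2) by auto
  have "AE x in M. norm x \<le> norm x0 + D"
    using K(1)
  proof eventually_elim
    case (elim x)
    thus ?case using K(3)[OF elim K(2)] norm_triangle_sub[of x x0] by linarith
  qed
  moreover have "w \<in> borel_measurable M" unfolding w_def using ig by measurable
  moreover have "\<phi> \<in> borel_measurable M" unfolding measurable_cong_sets[OF sb refl]
    using convex_on_continuous[OF open_UNIV cv] by (rule borel_measurable_continuous_onI)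
  ultimately have iw: "integrable M (\<lambda>x. w x * \<phi> x)" "integrable M (\<lambda>x. w x *\<^sub>R x)"
    using integrable_dominated_weight[OF P sb _ _ w Z(2) c0] by auto
  obtain b where bK: "\<And>x. x \<in> K \<Longrightarrow> norm (x - b) \<le> D"
    and Jensen: "integral\<^sup>L M w * \<phi> b \<le> integral\<^sup>L M (\<lambda>x. w x * \<phi> x)"
    using Jensen_centre_within_diameter[OF cv w(1) _ iw(2,1) K] ig unfolding w_def by auto
  have "AE x in M. ln F * g1 x + ln Z * g2 x
      \<le> max (g1 x - g2 x) 0 * \<phi> b - max (g2 x - g1 x) 0 * \<phi> x + 2 - g1 x - g2 x"
    using K(1)
  proof eventually_elim
    case (elim x)
    show ?case unfolding g1_def g2_def
      by (rule entropy_transport_pointwise[OF transport[OF elim bK] F(2) Z(2)])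
  qed
  with \<open>integral\<^sup>L M g1 = 1\<close> \<open>integral\<^sup>L M g2 = 1\<close> show ?thesis
    by (intro entropy_transport_integrated[OF P ig _ _ iw(1)[unfolded w_def]
          Jensen[unfolded w_def]])
qed

lemma tau_inequality_from_transport_bound:
  fixes M :: "'a::euclidean_space measure" and q \<phi> :: "'a \<Rightarrow> real"
  assumes P: "prob_space M" and sb: "sets M = sets borel"
    and cv: "convex_on UNIV \<phi>" and c0: "\<And>y. c0 \<le> \<phi> y"
    and qm: "q \<in> borel_measurable borel"
    and K: "AE x in M. x \<in> K" "x0 \<in> K" "\<And>x y. x \<in> K \<Longrightarrow> y \<in> K \<Longrightarrow> norm (x - y) \<le> D"
    and transport: "\<And>x b t. x \<in> K \<Longrightarrow> (\<And>y. y \<in> K \<Longrightarrow> norm (y - b) \<le> D) \<Longrightarrow> 0 \<le> t \<Longrightarrow> t \<le> 1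
      \<Longrightarrow> q x \<le> (1 - t) * \<phi> x + t * \<phi> b + t\<^sup>2 / 4"
  shows "(\<integral>\<^sup>+ x. ennreal (exp (q x)) \<partial>M) * (\<integral>\<^sup>+ x. ennreal (exp (- \<phi> x)) \<partial>M) \<le> 1"
proof -
  interpret prob_space M by (rule P)
  have meas: "borel_measurable M = borel_measurable borel"
    by (rule measurable_cong_sets[OF sb refl])
  have "q x \<le> \<phi> x0 + 1 / 4" if "x \<in> K" for x
    using transport[of x x0 1] that K(2,3) by (simp add: norm_minus_commute)
  hence "AE x in M. norm (exp (q x)) \<le> exp (\<phi> x0 + 1 / 4)"
    using K(1) by (auto elim!: eventually_mono)
  hence ieq: "integrable M (\<lambda>x. exp (q x))"
    using qm unfolding meas[symmetric] by (intro integrable_const_bound) auto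
  have "\<phi> \<in> borel_measurable M"
    unfolding meas using convex_on_continuous[OF open_UNIV cv]
    by (rule borel_measurable_continuous_onI)
  hence ie\<phi>: "integrable M (\<lambda>x. exp (- \<phi> x))"
    using c0 by (intro integrable_const_bound[where B="exp (- c0)"]) auto
  define F where "F = integral\<^sup>L M (\<lambda>x. exp (q x))"
  define Z where "Z = integral\<^sup>L M (\<lambda>x. exp (- \<phi> x))"
  have "0 < F" unfolding F_def using ieq by (intro expectation_greater) auto
  have "0 < Z" unfolding Z_def using ie\<phi> by (intro expectation_greater) auto
  have "ln F + ln Z \<le> 0"
    using entropy_transport_log_bound[OF P sb cv c0 K transport ieq ie\<phi>
        F_def \<open>0 < F\<close> Z_def \<open>0 < Z\<close>] .
  hence "ln (F * Z) \<le> 0" using \<open>0 < F\<close> \<open>0 < Z\<close> by (simp add: ln_mult)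
  hence "F * Z \<le> 1" using \<open>0 < F\<close> \<open>0 < Z\<close> by simp
  moreover have "(\<integral>\<^sup>+ x. ennreal (exp (q x)) \<partial>M) = F" "(\<integral>\<^sup>+ x. ennreal (exp (- \<phi> x)) \<partial>M) = Z"
    unfolding F_def Z_def using ieq ie\<phi> by (simp_all add: nn_integral_eq_integral)
  ultimately show ?thesis using \<open>0 < F\<close> \<open>0 < Z\<close> by (simp flip: ennreal_mult)
qed

lemma tau_inequality_if_diameter_le:
  fixes M :: "'a::euclidean_space measure" and \<phi> :: "'a \<Rightarrow> real"
  assumes P: "prob_space M" and sb: "sets M = sets borel" and "0 < D"
    and diam: "\<forall>x\<in>msupp M. \<forall>y\<in>msupp M. norm (x - y) \<le> D"
    and cv: "convex_on UNIV \<phi>" and bb: "bdd_below (range \<phi>)"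
  shows "(\<integral>\<^sup>+ x. ennreal (exp (real_of_ereal (Q1 D \<phi> x))) \<partial>M) *
    (\<integral>\<^sup>+ x. ennreal (exp (- \<phi> x)) \<partial>M) \<le> 1"
proof -
  obtain c0 where c0: "\<And>y. c0 \<le> \<phi> y" using bb by (auto simp: bdd_below_def)
  obtain x0 where x0: "x0 \<in> msupp M" using msupp_nonempty[OF P sb] by blast
  show ?thesis
  proof (rule tau_inequality_from_transport_bound[OF P sb cv c0 _ AE_in_msupp[OF sb] x0])
    show "(\<lambda>x. real_of_ereal (Q1 D \<phi> x)) \<in> borel_measurable borel"
      using \<open>0 < D\<close> convex_on_continuous[OF open_UNIV cv]
      by (intro borel_measurable_real_Q1 bb) auto
  qed (use diam real_Q1_le_convex_combination[OF \<open>0 < D\<close> cv bb] in auto)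
qed

section \<open>The inequality forces bounded support\<close>

lemma nn_integral_ge_on_set:
  assumes "A \<in> sets M" and "\<And>x. x \<in> A \<Longrightarrow> c \<le> f x"
  shows "c * emeasure M A \<le> (\<integral>\<^sup>+ x. f x \<partial>M)"
proof -
  have "c * emeasure M A = (\<integral>\<^sup>+ x. c * indicator A x \<partial>M)"
    using assms(1) by (simp add: nn_integral_cmult_indicator)
  also have "\<dots> \<le> (\<integral>\<^sup>+ x. f x \<partial>M)"
    using assms(2) by (intro nn_integral_mono) (simp split: split_indicator)
  finally show ?thesis .
qed

lemma tau_product_lower_bound:
  assumes "prob_space M" and "A \<in> sets M" and "B \<in> sets M"
    and "\<And>x. x \<in> A \<Longrightarrow> c \<le> q x" and "\<And>x. x \<in> B \<Longrightarrow> \<phi> x \<le> 0"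
  shows "ennreal (exp c * measure M A * measure M B)
    \<le> (\<integral>\<^sup>+ x. ennreal (exp (q x)) \<partial>M) * (\<integral>\<^sup>+ x. ennreal (exp (- \<phi> x)) \<partial>M)"
proof -
  interpret prob_space M by fact
  have "ennreal (exp c) * emeasure M A \<le> (\<integral>\<^sup>+ x. ennreal (exp (q x)) \<partial>M)"
    using assms(2,4) by (intro nn_integral_ge_on_set) auto
  moreover have "1 * emeasure M B \<le> (\<integral>\<^sup>+ x. ennreal (exp (- \<phi> x)) \<partial>M)"
    using assms(3,5) by (intro nn_integral_ge_on_set) auto
  ultimately show ?thesis
    by (simp add: emeasure_eq_measure ennreal_mult mult_mono)
qed

lemma real_Q1_ramp_ge:
  fixes u :: "'a::euclidean_space"
  assumes "norm u \<le> 1" and "0 \<le> a" and "0 \<le> D" and "c + D + s \<le> u \<bullet> z"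
  shows "a * s \<le> real_of_ereal (Q1 D (\<lambda>y. a * max (u \<bullet> y - c) 0) z)"
proof (rule real_Q1_ge[OF assms(3)])
  show "bdd_below (range (\<lambda>y. a * max (u \<bullet> y - c) 0))"
    using assms(2) by (intro bdd_belowI2[of _ 0]) simp
  fix y assume "norm (z - y) \<le> D"
  hence "norm u * norm (z - y) \<le> 1 * D" using assms(1) by (intro mult_mono) auto
  hence "u \<bullet> (z - y) \<le> D" using norm_cauchy_schwarz[of u "z - y"] by linarith
  hence "s \<le> max (u \<bullet> y - c) 0" using assms(4) by (simp add: inner_diff_right)
  thus "a * s \<le> a * max (u \<bullet> y - c) 0" using assms(2) by (rule mult_left_mono)
qed

lemma diameter_le_if_tau_inequality:
  fixes M :: "'a::euclidean_space measure"
  assumes P: "prob_space M" and sb: "sets M = sets borel" and "0 < D"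
    and tau: "\<forall>\<phi> :: 'a \<Rightarrow> real. convex_on UNIV \<phi> \<longrightarrow> bdd_below (range \<phi>) \<longrightarrow>
       (\<integral>\<^sup>+ x. ennreal (exp (real_of_ereal (Q1 D \<phi> x))) \<partial>M) *
       (\<integral>\<^sup>+ x. ennreal (exp (- \<phi> x)) \<partial>M) \<le> 1"
    and x0: "x0 \<in> msupp M" and y0: "y0 \<in> msupp M"
  shows "norm (x0 - y0) \<le> D"
proof (rule ccontr)
  interpret prob_space M by (rule P)
  assume "\<not> norm (x0 - y0) \<le> D"
  define R where "R = norm (y0 - x0)"
  define e where "e = (R - D) / 4"
  define u where "u = (1 / R) *\<^sub>R (y0 - x0)"
  have "0 < e" using \<open>\<not> norm (x0 - y0) \<le> D\<close> unfolding e_def R_def by (simp add: norm_minus_commute)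
  hence "0 < R" using \<open>0 < D\<close> unfolding e_def by simp
  have "norm u = 1" using \<open>0 < R\<close> unfolding u_def R_def by simp
  have "u \<bullet> (y0 - x0) = R"
    using \<open>0 < R\<close> unfolding u_def R_def by (simp add: dot_square_norm power2_eq_square)
  have u_le: "u \<bullet> v \<le> norm v" for v using norm_cauchy_schwarz[of u v] \<open>norm u = 1\<close> by simp
  define p1 where "p1 = measure M (ball x0 e)"
  define p2 where "p2 = measure M (ball y0 e)"
  have "0 < p1" "0 < p2" unfolding p1_def p2_def
    using measure_ball_pos_if_msupp[OF finite_measure_axioms] x0 y0 \<open>0 < e\<close> by simp_all
  \<comment> \<open>The slope makes \<open>a * (2 * e) * p1 * p2 = 1\<close>, hence \<open>exp (a * (2 * e)) * p1 * p2 > 1\<close>.\<close>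
  define a where "a = 1 / (2 * e * p1 * p2)"
  have "0 < a" unfolding a_def using \<open>0 < e\<close> \<open>0 < p1\<close> \<open>0 < p2\<close> by simp
  define \<phi> where "\<phi> z = a * max (u \<bullet> z - (u \<bullet> x0 + e)) 0" for z
  have cv: "convex_on UNIV \<phi>"
    unfolding \<phi>_def[abs_def] using \<open>0 < a\<close> by (intro convex_on_affine_ramp) simp
  have bb: "bdd_below (range \<phi>)" unfolding \<phi>_def using \<open>0 < a\<close> by (intro bdd_belowI2[of _ 0]) simp
  have "a * (2 * e) \<le> real_of_ereal (Q1 D \<phi> z)" if "z \<in> ball y0 e" for z
    unfolding \<phi>_def[abs_def]
  proof (rule real_Q1_ramp_ge)
    have "u \<bullet> (y0 - z) < e" using u_le[of "y0 - z"] that by (simp add: dist_norm)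
    thus "u \<bullet> x0 + e + D + 2 * e \<le> u \<bullet> z"
      using \<open>u \<bullet> (y0 - x0) = R\<close> unfolding e_def by (simp add: inner_diff_right field_simps)
  qed (use \<open>norm u = 1\<close> \<open>0 < a\<close> \<open>0 < D\<close> in auto)
  moreover have "\<phi> x \<le> 0" if "x \<in> ball x0 e" for x
    using u_le[of "x - x0"] that unfolding \<phi>_def
    by (simp add: dist_norm norm_minus_commute inner_diff_right)
  ultimately have "ennreal (exp (a * (2 * e)) * p2 * p1)
      \<le> (\<integral>\<^sup>+ x. ennreal (exp (real_of_ereal (Q1 D \<phi> x))) \<partial>M) * (\<integral>\<^sup>+ x. ennreal (exp (- \<phi> x)) \<partial>M)"
    unfolding p1_def p2_def using sb by (intro tau_product_lower_bound[OF P]) auto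
  also have "\<dots> \<le> 1" using tau cv bb by simp
  finally have "exp (a * (2 * e)) * (p1 * p2) \<le> 1"
    using \<open>0 < p1\<close> \<open>0 < p2\<close> by (simp add: ennreal_le_1 mult_ac)
  moreover have "a * (2 * e) * (p1 * p2) = 1"
    unfolding a_def using \<open>0 < e\<close> \<open>0 < p1\<close> \<open>0 < p2\<close> by (simp add: field_simps)
  moreover have "a * (2 * e) < exp (a * (2 * e))"
    using exp_ge_add_one_self[of "a * (2 * e)"] by linarith
  ultimately show False
    using mult_strict_right_mono[of "a * (2 * e)" "exp (a * (2 * e))" "p1 * p2"] \<open>0 < p1\<close> \<open>0 < p2\<close>
    by simp
qed

theorem lemma3p2:
  fixes M :: "'a::euclidean_space measure" and D :: real
  assumes "prob_space M" and "sets M = sets borel" and "D > 0"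
  shows "(\<forall>x\<in>msupp M. \<forall>y\<in>msupp M. norm (x - y) \<le> D) \<longleftrightarrow>
    (\<forall>\<phi> :: 'a \<Rightarrow> real. convex_on UNIV \<phi> \<longrightarrow> bdd_below (range \<phi>) \<longrightarrow>
       (\<integral>\<^sup>+ x. ennreal (exp (real_of_ereal (Q1 D \<phi> x))) \<partial>M) *
       (\<integral>\<^sup>+ x. ennreal (exp (- \<phi> x)) \<partial>M) \<le> 1)"
  using tau_inequality_if_diameter_le[OF assms] diameter_le_if_tau_inequality[OF assms]
  by (intro iffI allI impI ballI) auto

end
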